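(* There is a constant $c>0$ such that $\mathbb E K_{n,1}\le c\,\Phi(n)$ for all $n\in\mathbb N$.
   Context: Let $\nu$ be a nonzero measure on $(0,1)$ with $\int_0^1x\,\nu(dx)<\infty$; for $1\le k\le m$ let $\lambda_{m,k}=\int_0^1x^k(1-x)^{m-k}\nu(dx)$, $\varphi_{m,k}=\binom mk\lambda_{m,k}$, $\Phi(z)=\int_0^1(1-(1-x)^z)\nu(dx)$. Let $N_n^*$ be the nonincreasing continuous-time Markov chain started at $n$ which jumps from $m$ to $m-k$ at rate $\varphi_{m,k}$, $1\le k\le m$, absorbed at $0$. $K_{n,1}$ is the number of jumps of size exactly $1$ made by $N_n^*$ on its way from $n$ to $0$. *)

theory Defs
  imports "HOL-Probability.Probability"
begin

definition lam :: "real measure \<Rightarrow> nat \<Rightarrow> nat \<Rightarrow> real" where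
  "lam \<nu> m k = (\<integral>x. x ^ k * (1 - x) ^ (m - k) \<partial>\<nu>)"

text \<open>\<phi>_{m,k} = binom(m,k) \<lambda>_{m,k}: rate of the jump m \<rightarrow> m-k\<close>
definition phi :: "real measure \<Rightarrow> nat \<Rightarrow> nat \<Rightarrow> real" where
  "phi \<nu> m k = real (m choose k) * lam \<nu> m k"

definition Phi :: "real measure \<Rightarrow> nat \<Rightarrow> real" where
  "Phi \<nu> n = (\<integral>x. 1 - (1 - x) ^ n \<partial>\<nu>)"

definition qrate :: "real measure \<Rightarrow> nat \<Rightarrow> real" where
  "qrate \<nu> m = (\<Sum>k=1..m. phi \<nu> m k)"

text \<open>Law of the size of the next jump of the chain from state m (embedded jump chain):
  jump of size k with probability \<phi>_{m,k} / q_m, 1 \<le> k \<le> m.\<close>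
definition jump_pmf :: "real measure \<Rightarrow> nat \<Rightarrow> nat pmf" where
  "jump_pmf \<nu> m = embed_pmf (\<lambda>k. if 1 \<le> k \<and> k \<le> m then phi \<nu> m k / qrate \<nu> m else 0)"

text \<open>Law of the sequence of jump sizes made by N*_m on its way from m to 0.\<close>
function jumps_pmf :: "real measure \<Rightarrow> nat \<Rightarrow> nat list pmf" where
  "jumps_pmf \<nu> m =
     (if m = 0 then return_pmf []
      else bind_pmf (jump_pmf \<nu> m) (\<lambda>k. map_pmf (Cons k) (jumps_pmf \<nu> (m - max 1 k))))"
  by auto
termination by (relation "Wellfounded.measure (\<lambda>(_, m). m)") auto

definition EK1 :: "real measure \<Rightarrow> nat \<Rightarrow> real" where
  "EK1 \<nu> n = measure_pmf.expectation (jumps_pmf \<nu> n) (\<lambda>ks. real (length (filter (\<lambda>k. k = 1) ks)))"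

end

theory Submission
  imports Defs
begin

(*
  We show  E K_{n,1} \<le> \<Phi>(n) / \<Phi>(1)  for every n, so c = 1/\<Phi>(1) works.

  Conditioning on the first jump (of size k with probability \<phi>_{m,k}/q_m) gives
     E K_{m,1} = \<Sum>_k \<phi>_{m,k}/q_m * ([k = 1] + E K_{m-k,1}),   E K_{0,1} = 0.
  A function that is a supersolution of this recursion dominates its solution
  (comparison principle, proved by strong induction).  So it suffices that
  F(m) = \<Phi>(m)/\<Phi>(1) is a supersolution, i.e. the drift inequality
     \<phi>_{m,1} \<Phi>(1) + \<Sum>_k \<phi>_{m,k} \<Phi>(m-k) \<le> q_m \<Phi>(m).
  This follows from two facts about the integrand x^k (1-x)^(m-k):
  the increment bound  \<Phi>(m) - \<Phi>(m-k) \<ge> k \<lambda>_{m,1}  (pointwise, from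
  (1-x)^(m-k) - (1-x)^m \<ge> k x (1-x)^(m-1)), and the binomial first moment
  \<Sum>_k k \<phi>_{m,k} = m \<Phi>(1), with \<phi>_{m,1} = m \<lambda>_{m,1}.
*)

section \<open>Elementary inequalities and the binomial first moment\<close>

lemma one_minus_power_lower:
  fixes a :: real
  assumes "0 \<le> a" "a \<le> 1" "1 \<le> k"
  shows "real k * (1 - a) * a ^ (k - 1) \<le> 1 - a ^ k"
  using assms(3)
proof (induction k rule: dec_induct)
  case base
  then show ?case by simp
next
  case (step k)
  have "a ^ k \<le> a ^ (k - 1)"
    using assms step.hyps by (intro power_decreasing) auto
  then have "real k * (1 - a) * a ^ k \<le> real k * (1 - a) * a ^ (k - 1)"
    using assms by (intro mult_left_mono) auto
  moreover have "1 - a ^ Suc k = (1 - a ^ k) + a ^ k * (1 - a)"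
    by (simp add: algebra_simps)
  ultimately show ?case
    using step.IH by (simp add: algebra_simps)
qed

text \<open>With a = 1 - x: the pointwise inequality behind \<Phi>(m) - \<Phi>(m-k) \<ge> k \<lambda>_{m,1}.\<close>
lemma power_diff_lower:
  fixes a :: real
  assumes "0 \<le> a" "a \<le> 1" "k \<le> m"
  shows "real k * (1 - a) * a ^ (m - 1) \<le> a ^ (m - k) - a ^ m"
proof (cases "k = 0")
  case True
  then show ?thesis by simp
next
  case False
  have split_m: "a ^ m = a ^ (m - k) * a ^ k"
    using assms by (simp add: power_add[symmetric])
  have split_m1: "a ^ (m - 1) = a ^ (m - k) * a ^ (k - 1)"
    using assms False by (simp add: power_add[symmetric])
  have "a ^ (m - k) * (real k * (1 - a) * a ^ (k - 1)) \<le> a ^ (m - k) * (1 - a ^ k)"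
    using one_minus_power_lower[of a k] assms False by (intro mult_left_mono) auto
  then show ?thesis
    unfolding split_m split_m1 by (simp add: algebra_simps)
qed

lemma binomial_first_moment:
  fixes x :: real
  shows "(\<Sum>k=1..m. real k * real (m choose k) * (x ^ k * (1 - x) ^ (m - k))) = real m * x"
proof (cases m)
  case 0
  then show ?thesis by simp
next
  case (Suc n)
  have "(\<Sum>k=1..Suc n. real k * real (Suc n choose k) * (x ^ k * (1 - x) ^ (Suc n - k)))
      = (\<Sum>j=0..n. real (Suc j) * real (Suc n choose Suc j) * (x ^ Suc j * (1 - x) ^ (n - j)))"
    unfolding One_nat_def sum.shift_bounds_cl_Suc_ivl by simp
  also have "\<dots> = (\<Sum>j=0..n. real (Suc n) * x * (real (n choose j) * x ^ j * (1 - x) ^ (n - j)))"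
  proof (rule sum.cong[OF refl])
    fix j
    have "real (Suc j) * real (Suc n choose Suc j) = real (Suc n) * real (n choose j)"
      using Suc_times_binomial[of j n] by (metis of_nat_mult)
    then show "real (Suc j) * real (Suc n choose Suc j) * (x ^ Suc j * (1 - x) ^ (n - j))
      = real (Suc n) * x * (real (n choose j) * x ^ j * (1 - x) ^ (n - j))"
      by (simp add: algebra_simps)
  qed
  also have "\<dots> = real (Suc n) * x * (x + (1 - x)) ^ n"
    by (simp only: binomial_ring[of x "1 - x" n] sum_distrib_left atLeast0AtMost)
  finally show ?thesis
    using Suc by simp
qed

section \<open>A comparison principle for first-step recursions\<close>

lemma supersolution_bound:
  fixes E F :: "nat \<Rightarrow> real" and p r :: "nat \<Rightarrow> nat \<Rightarrow> real"
  assumes base: "E 0 \<le> F 0"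
    and recursion: "\<And>m. 1 \<le> m \<Longrightarrow> E m = (\<Sum>k=1..m. p m k * (r m k + E (m - k)))"
    and weights_nonneg: "\<And>m k. 0 \<le> p m k"
    and supersolution: "\<And>m. 1 \<le> m \<Longrightarrow> (\<Sum>k=1..m. p m k * (r m k + F (m - k))) \<le> F m"
  shows "E n \<le> F n"
proof (induction n rule: less_induct)
  case (less m)
  show ?case
  proof (cases "m = 0")
    case True
    with base show ?thesis by simp
  next
    case False
    then have m: "1 \<le> m" by simp
    have "E m = (\<Sum>k=1..m. p m k * (r m k + E (m - k)))"
      using recursion[OF m] .
    also have "\<dots> \<le> (\<Sum>k=1..m. p m k * (r m k + F (m - k)))"
    proof (rule sum_mono)
      fix k assume "k \<in> {1..m}"
      then have "E (m - k) \<le> F (m - k)" using less.IH by simp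
      then show "p m k * (r m k + E (m - k)) \<le> p m k * (r m k + F (m - k))"
        using weights_nonneg by (intro mult_left_mono) auto
    qed
    also have "\<dots> \<le> F m"
      using supersolution[OF m] .
    finally show ?thesis .
  qed
qed

section \<open>Integral estimates for the jump measure\<close>

declare jumps_pmf.simps[simp del]

locale jump_measure =
  fixes \<nu> :: "real measure"
  assumes sets_nu: "sets \<nu> = sets borel"
    and outside_null: "emeasure \<nu> (- {0<..<1}) = 0"
    and nonzero: "emeasure \<nu> {0<..<1} \<noteq> 0"
    and first_moment: "(\<integral>\<^sup>+ x. ennreal x \<partial>\<nu>) < \<infinity>"
begin

lemma AE_unit_interval: "AE x in \<nu>. 0 < x \<and> x < 1"
proof (rule AE_I'[of "- {0<..<1}"])
  have "- {0<..<1::real} \<in> sets borel" by simp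
  then show "- {0<..<1} \<in> null_sets \<nu>"
    using outside_null sets_nu by (simp add: null_sets_def)
qed auto

lemma borel_measurable_nu: "f \<in> borel_measurable borel \<Longrightarrow> f \<in> borel_measurable \<nu>"
  using measurable_cong_sets[OF sets_nu refl] by blast

lemma integrable_identity: "integrable \<nu> (\<lambda>x. x)"
proof (rule integrableI_nonneg)
  show "(\<lambda>x. x) \<in> borel_measurable \<nu>" by (rule borel_measurable_nu) simp
  show "AE x in \<nu>. 0 \<le> x" using AE_unit_interval by eventually_elim auto
qed (use first_moment in auto)

lemma integrable_linearly_bounded:
  fixes f :: "real \<Rightarrow> real"
  assumes "f \<in> borel_measurable borel" "\<And>x. 0 < x \<Longrightarrow> x < 1 \<Longrightarrow> \<bar>f x\<bar> \<le> C * x"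
  shows "integrable \<nu> f"
proof (rule Bochner_Integration.integrable_bound)
  show "integrable \<nu> (\<lambda>x. C * x)" using integrable_identity by simp
  show "f \<in> borel_measurable \<nu>" using assms(1) borel_measurable_nu by blast
  show "AE x in \<nu>. norm (f x) \<le> norm (C * x)"
    using AE_unit_interval
  proof eventually_elim
    case (elim x)
    then have "\<bar>f x\<bar> \<le> C * x" using assms(2) by simp
    then show ?case by (simp add: order_trans[OF _ abs_ge_self])
  qed
qed

lemma integral_pos:
  fixes f :: "real \<Rightarrow> real"
  assumes "integrable \<nu> f" "\<And>x. 0 < x \<Longrightarrow> x < 1 \<Longrightarrow> 0 < f x"
  shows "0 < integral\<^sup>L \<nu> f"
proof -
  have nonneg: "AE x in \<nu>. 0 \<le> f x"
    using AE_unit_interval by eventually_elim (simp add: assms(2) less_imp_le)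
  have "integral\<^sup>L \<nu> f \<noteq> 0"
  proof
    assume "integral\<^sup>L \<nu> f = 0"
    then have "AE x in \<nu>. f x = 0"
      using integral_nonneg_eq_0_iff_AE[OF assms(1) nonneg] by simp
    then have "AE x in \<nu>. False"
      using AE_unit_interval by eventually_elim (metis assms(2) less_irrefl)
    then obtain Z where Z: "space \<nu> \<subseteq> Z" "emeasure \<nu> Z = 0" "Z \<in> sets \<nu>"
      by (auto elim: AE_E)
    have "emeasure \<nu> {0<..<1} \<le> emeasure \<nu> Z"
      by (rule emeasure_mono) (use Z sets_eq_imp_space_eq[OF sets_nu] in auto)
    then show False using nonzero Z by simp
  qed
  moreover have "0 \<le> integral\<^sup>L \<nu> f"
    using nonneg by (rule integral_nonneg_AE)
  ultimately show ?thesis by simp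
qed

lemma integrable_lam_integrand:
  assumes "1 \<le> k"
  shows "integrable \<nu> (\<lambda>x. x ^ k * (1 - x) ^ (m - k))"
proof (rule integrable_linearly_bounded[where C = 1])
  fix x :: real assume x: "0 < x" "x < 1"
  have "x ^ k * (1 - x) ^ (m - k) \<le> x ^ k"
    using x mult_left_mono[of "(1 - x) ^ (m - k)" 1 "x ^ k"] by (simp add: power_le_one)
  also have "x ^ k \<le> x ^ 1"
    using x assms by (intro power_decreasing) auto
  finally show "\<bar>x ^ k * (1 - x) ^ (m - k)\<bar> \<le> 1 * x" using x by simp
qed measurable

lemma integrable_Phi_integrand: "integrable \<nu> (\<lambda>x. 1 - (1 - x) ^ n)"
proof (rule integrable_linearly_bounded[where C = "real n"])
  fix x :: real assume x: "0 < x" "x < 1"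
  have "1 + real n * (- x) \<le> (1 + - x) ^ n"
    using x by (intro Bernoulli_inequality) auto
  moreover have "(1 - x) ^ n \<le> 1"
    using x by (intro power_le_one) auto
  ultimately show "\<bar>1 - (1 - x) ^ n\<bar> \<le> real n * x" by simp
qed measurable

lemma phi_nonneg: "0 \<le> phi \<nu> m k"
proof -
  have "0 \<le> lam \<nu> m k"
    unfolding lam_def by (rule integral_nonneg_AE) (use AE_unit_interval in \<open>auto elim: AE_mp\<close>)
  then show ?thesis unfolding phi_def by simp
qed

lemma Phi_1: "Phi \<nu> 1 = integral\<^sup>L \<nu> (\<lambda>x. x)"
  unfolding Phi_def by simp

lemma Phi_1_pos: "0 < Phi \<nu> 1"
  unfolding Phi_1 by (rule integral_pos[OF integrable_identity])

lemma lam_1_pos: "0 < lam \<nu> m 1"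
  unfolding lam_def by (rule integral_pos[OF integrable_lam_integrand]) auto

lemma Phi_increment_lower:
  assumes "k \<le> m"
  shows "real k * lam \<nu> m 1 \<le> Phi \<nu> m - Phi \<nu> (m - k)"
proof -
  have "real k * lam \<nu> m 1 = integral\<^sup>L \<nu> (\<lambda>x. real k * (x ^ 1 * (1 - x) ^ (m - 1)))"
    unfolding lam_def by simp
  also have "\<dots> \<le> integral\<^sup>L \<nu> (\<lambda>x. (1 - (1 - x) ^ m) - (1 - (1 - x) ^ (m - k)))"
  proof (rule integral_mono_AE)
    show "integrable \<nu> (\<lambda>x. real k * (x ^ 1 * (1 - x) ^ (m - 1)))"
      using integrable_lam_integrand[of 1 m] by simp
    show "integrable \<nu> (\<lambda>x. (1 - (1 - x) ^ m) - (1 - (1 - x) ^ (m - k)))"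
      using integrable_Phi_integrand integrable_Phi_integrand
      by (rule Bochner_Integration.integrable_diff)
    show "AE x in \<nu>. real k * (x ^ 1 * (1 - x) ^ (m - 1)) \<le> (1 - (1 - x) ^ m) - (1 - (1 - x) ^ (m - k))"
      using AE_unit_interval
    proof eventually_elim
      case (elim x)
      then show ?case
        using power_diff_lower[of "1 - x" k m] assms by (simp add: algebra_simps)
    qed
  qed
  also have "\<dots> = Phi \<nu> m - Phi \<nu> (m - k)"
    unfolding Phi_def
    by (rule Bochner_Integration.integral_diff[OF integrable_Phi_integrand integrable_Phi_integrand])
  finally show ?thesis .
qed

lemma phi_first_moment: "(\<Sum>k=1..m. real k * phi \<nu> m k) = real m * Phi \<nu> 1"
proof -
  have "(\<Sum>k=1..m. real k * phi \<nu> m k)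
     = (\<Sum>k=1..m. integral\<^sup>L \<nu> (\<lambda>x. real k * real (m choose k) * (x ^ k * (1 - x) ^ (m - k))))"
    by (rule sum.cong) (simp_all add: phi_def lam_def)
  also have "\<dots> = integral\<^sup>L \<nu> (\<lambda>x. \<Sum>k=1..m. real k * real (m choose k) * (x ^ k * (1 - x) ^ (m - k)))"
    by (rule Bochner_Integration.integral_sum[symmetric]) (use integrable_lam_integrand in auto)
  also have "\<dots> = integral\<^sup>L \<nu> (\<lambda>x. real m * x)"
    by (simp only: binomial_first_moment)
  finally show ?thesis
    unfolding Phi_1 integral_mult_right_zero .
qed

text \<open>The drift inequality: F(m) = \<Phi>(m)/\<Phi>(1) is a supersolution of the recursion for EK1.\<close>
lemma drift_inequality:
  "phi \<nu> m 1 * Phi \<nu> 1 + (\<Sum>k=1..m. phi \<nu> m k * Phi \<nu> (m - k)) \<le> qrate \<nu> m * Phi \<nu> m"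
proof -
  have "phi \<nu> m 1 * Phi \<nu> 1 = lam \<nu> m 1 * (\<Sum>k=1..m. real k * phi \<nu> m k)"
    unfolding phi_first_moment by (simp add: phi_def)
  also have "\<dots> = (\<Sum>k=1..m. phi \<nu> m k * (real k * lam \<nu> m 1))"
    by (simp add: sum_distrib_left algebra_simps)
  also have "\<dots> \<le> (\<Sum>k=1..m. phi \<nu> m k * (Phi \<nu> m - Phi \<nu> (m - k)))"
    by (intro sum_mono mult_left_mono) (use Phi_increment_lower phi_nonneg in auto)
  also have "\<dots> = qrate \<nu> m * Phi \<nu> m - (\<Sum>k=1..m. phi \<nu> m k * Phi \<nu> (m - k))"
    by (simp add: qrate_def right_diff_distrib sum_subtractf sum_distrib_right)
  finally show ?thesis by simp
qed

section \<open>The embedded jump chain and the first-step recursion for EK1\<close>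

lemma qrate_pos:
  assumes "1 \<le> m"
  shows "0 < qrate \<nu> m"
proof -
  have "0 < phi \<nu> m 1" using assms lam_1_pos by (simp add: phi_def)
  also have "phi \<nu> m 1 \<le> qrate \<nu> m"
    unfolding qrate_def by (rule member_le_sum) (use assms phi_nonneg in auto)
  finally show ?thesis .
qed

lemma pmf_jump:
  assumes m: "1 \<le> m"
  shows "pmf (jump_pmf \<nu> m) k = (if 1 \<le> k \<and> k \<le> m then phi \<nu> m k / qrate \<nu> m else 0)"
  unfolding jump_pmf_def
proof (rule pmf_embed_pmf)
  let ?w = "\<lambda>k. if 1 \<le> k \<and> k \<le> m then phi \<nu> m k / qrate \<nu> m else 0"
  show "0 \<le> ?w k" for k
    using phi_nonneg qrate_pos[OF m] by simp
  have "(\<integral>\<^sup>+ k. ennreal (?w k) \<partial>count_space UNIV) = (\<Sum>k\<in>{1..m}. ennreal (?w k))"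
    by (rule nn_integral_count_space') auto
  also have "\<dots> = ennreal (\<Sum>k\<in>{1..m}. phi \<nu> m k / qrate \<nu> m)"
    using phi_nonneg qrate_pos[OF m] by (subst sum_ennreal) auto
  also have "(\<Sum>k\<in>{1..m}. phi \<nu> m k / qrate \<nu> m) = 1"
    using qrate_pos[OF m] by (simp add: sum_divide_distrib[symmetric] qrate_def)
  finally show "(\<integral>\<^sup>+ k. ennreal (?w k) \<partial>count_space UNIV) = 1"
    by simp
qed

lemma set_jump: "1 \<le> m \<Longrightarrow> set_pmf (jump_pmf \<nu> m) \<subseteq> {1..m}"
  by (auto simp: set_pmf_iff pmf_jump split: if_splits)

text \<open>The chain reaches 0 in at most m jumps, so its jump sequence has finite support.\<close>
lemma finite_jumps: "finite (set_pmf (jumps_pmf \<nu> m))"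
proof (induction m rule: less_induct)
  case (less m)
  show ?case
  proof (cases "m = 0")
    case True
    then show ?thesis by (subst jumps_pmf.simps) simp
  next
    case False
    then have m: "1 \<le> m" by simp
    have "finite (\<Union>k\<in>set_pmf (jump_pmf \<nu> m). set_pmf (map_pmf (Cons k) (jumps_pmf \<nu> (m - max 1 k))))"
    proof (rule finite_UN_I)
      show "finite (set_pmf (jump_pmf \<nu> m))"
        using set_jump[OF m] finite_subset by blast
      show "finite (set_pmf (map_pmf (Cons k) (jumps_pmf \<nu> (m - max 1 k))))" for k
        using less[of "m - max 1 k"] m by simp
    qed
    then show ?thesis
      using False by (subst jumps_pmf.simps) simp
  qed
qed

lemma EK1_0: "EK1 \<nu> 0 = 0"
  unfolding EK1_def by (subst jumps_pmf.simps) simp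

text \<open>First-step analysis: condition on the size k of the first jump.\<close>
lemma EK1_first_step:
  assumes m: "1 \<le> m"
  shows "EK1 \<nu> m = (\<Sum>k=1..m. pmf (jump_pmf \<nu> m) k * ((if k = 1 then 1 else 0) + EK1 \<nu> (m - k)))"
proof -
  let ?ones = "\<lambda>ks. real (length (filter (\<lambda>k. k = 1) ks))"
  have "EK1 \<nu> m = measure_pmf.expectation
      (jump_pmf \<nu> m \<bind> (\<lambda>k. map_pmf (Cons k) (jumps_pmf \<nu> (m - max 1 k)))) ?ones"
    unfolding EK1_def using m by (subst jumps_pmf.simps) simp
  also have "\<dots> = (\<Sum>k\<in>{1..m}. pmf (jump_pmf \<nu> m) k *\<^sub>R
      measure_pmf.expectation (map_pmf (Cons k) (jumps_pmf \<nu> (m - max 1 k))) ?ones)"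
    by (rule pmf_expectation_bind) (use set_jump[OF m] finite_jumps in auto)
  also have "\<dots> = (\<Sum>k=1..m. pmf (jump_pmf \<nu> m) k * ((if k = 1 then 1 else 0) + EK1 \<nu> (m - k)))"
  proof (rule sum.cong[OF refl])
    fix k assume k: "k \<in> {1..m}"
    have "measure_pmf.expectation (map_pmf (Cons k) (jumps_pmf \<nu> (m - max 1 k))) ?ones
        = measure_pmf.expectation (jumps_pmf \<nu> (m - k)) (\<lambda>ks. (if k = 1 then 1 else 0) + ?ones ks)"
      using k by (simp add: max_def)
    also have "\<dots> = (if k = 1 then 1 else 0) + EK1 \<nu> (m - k)"
      unfolding EK1_def
      by (subst Bochner_Integration.integral_add)
        (auto intro: integrable_measure_pmf_finite finite_jumps)
    finally show "pmf (jump_pmf \<nu> m) k *\<^sub>R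
        measure_pmf.expectation (map_pmf (Cons k) (jumps_pmf \<nu> (m - max 1 k))) ?ones
      = pmf (jump_pmf \<nu> m) k * ((if k = 1 then 1 else 0) + EK1 \<nu> (m - k))"
      by simp
  qed
  finally show ?thesis .
qed

text \<open>Dividing the drift inequality by q_m \<Phi>(1) shows \<Phi>/\<Phi>(1) is a supersolution.\<close>
lemma Phi_supersolution:
  assumes m: "1 \<le> m"
  shows "(\<Sum>k=1..m. pmf (jump_pmf \<nu> m) k * ((if k = 1 then 1 else 0) + Phi \<nu> (m - k) / Phi \<nu> 1))
    \<le> Phi \<nu> m / Phi \<nu> 1"
proof -
  let ?q = "qrate \<nu> m" and ?P1 = "Phi \<nu> 1"
  have pos: "0 < ?q * ?P1" using qrate_pos[OF m] Phi_1_pos by simp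
  have "(\<Sum>k=1..m. pmf (jump_pmf \<nu> m) k * ((if k = 1 then 1 else 0) + Phi \<nu> (m - k) / ?P1))
      = (\<Sum>k=1..m. (if k = 1 then phi \<nu> m 1 * ?P1 else 0) + phi \<nu> m k * Phi \<nu> (m - k)) / (?q * ?P1)"
    unfolding sum_divide_distrib using qrate_pos[OF m] Phi_1_pos
    by (intro sum.cong refl) (auto simp: pmf_jump[OF m] field_simps)
  also have "\<dots> = (phi \<nu> m 1 * ?P1 + (\<Sum>k=1..m. phi \<nu> m k * Phi \<nu> (m - k))) / (?q * ?P1)"
    using m by (simp add: sum.distrib)
  also have "\<dots> \<le> (?q * Phi \<nu> m) / (?q * ?P1)"
    using drift_inequality pos by (intro divide_right_mono) auto
  also have "\<dots> = Phi \<nu> m / ?P1"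
    using qrate_pos[OF m] by simp
  finally show ?thesis .
qed

lemma EK1_le_Phi: "EK1 \<nu> n \<le> Phi \<nu> n / Phi \<nu> 1"
proof (rule supersolution_bound[where E = "EK1 \<nu>" and F = "\<lambda>n. Phi \<nu> n / Phi \<nu> 1"
      and p = "\<lambda>m k. pmf (jump_pmf \<nu> m) k"
      and r = "\<lambda>m k. if k = 1 then 1 else 0"])
  show "EK1 \<nu> 0 \<le> Phi \<nu> 0 / Phi \<nu> 1"
    by (simp add: EK1_0 Phi_def)
  show "EK1 \<nu> m = (\<Sum>k=1..m. pmf (jump_pmf \<nu> m) k * ((if k = 1 then 1 else 0) + EK1 \<nu> (m - k)))"
    if "1 \<le> m" for m
    using EK1_first_step[OF that] .
  show "(\<Sum>k=1..m. pmf (jump_pmf \<nu> m) k * ((if k = 1 then 1 else 0) + Phi \<nu> (m - k) / Phi \<nu> 1))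
      \<le> Phi \<nu> m / Phi \<nu> 1" if "1 \<le> m" for m
    using Phi_supersolution[OF that] .
qed simp

end

theorem mainTheorem10:
  fixes \<nu> :: "real measure"
  assumes "sets \<nu> = sets borel"
    and "emeasure \<nu> (- {0<..<1}) = 0"
    and "emeasure \<nu> {0<..<1} \<noteq> 0"
    and "(\<integral>\<^sup>+ x. ennreal x \<partial>\<nu>) < \<infinity>"
  shows "\<exists>c>0. \<forall>n::nat. EK1 \<nu> n \<le> c * Phi \<nu> n"
proof -
  interpret jump_measure \<nu>
    using assms by unfold_locales
  have "0 < 1 / Phi \<nu> 1" and "\<forall>n. EK1 \<nu> n \<le> 1 / Phi \<nu> 1 * Phi \<nu> n"
    using Phi_1_pos EK1_le_Phi by auto
  then show ?thesis by blast
qed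

end
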